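(* Let $0 \leq r < 1$. Define $\delta_k \in \{0,1\}$ for $k \geq 1$ inductively by $\delta_k = 1$ if $\frac{\sum_{i=1}^{k-1} 2i\delta_i + 2k}{k(k+1)} \leq r$, and $\delta_k = 0$ otherwise. For $k \geq 1$ let $w^{\langle k \rangle}$ be the word consisting of $2k$ copies of the letter $1 - \delta_k$, and let $w = w^{\langle 1 \rangle} w^{\langle 2 \rangle} w^{\langle 3 \rangle} \cdots$ (infinite concatenation). Then $\lim_{n \to \infty} |P(w^{(n)})|/n = r$.
   Context: $w^{(n)}$ denotes the initial subword of length $n$ of $w$. For a binary word $u = u_1 \cdots u_\ell$ of length $\ell$, $P(u)$ is the set of indices $i \geq 2$ such that at least one of the following holds: (i) $\ell \geq i$ and $u_{i-1} u_i = 00$; (ii) $\ell \geq i+2$ and $u_{i-1} u_i u_{i+1} u_{i+2} = 0100$; (iii) $\ell \geq i+3$ and $u_{i-1} \cdots u_{i+3} = 01010$. *)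

theory Defs
  imports Complex_Main
begin

text \<open>The sequence delta_k (k >= 1), defined by strong recursion; delta r 0 is a dummy 0.\<close>
function delta :: "real \<Rightarrow> nat \<Rightarrow> nat" where
  "delta r k = (if k = 0 then 0
     else if (real (\<Sum>i\<in>{1..<k}. 2 * i * delta r i) + 2 * real k) / (real k * real (k + 1)) \<le> r
          then 1 else 0)"
  by auto
termination by (relation "measure snd") auto

definition wblock :: "real \<Rightarrow> nat \<Rightarrow> nat list" where
  "wblock r k = replicate (2 * k) (1 - delta r k)"

text \<open>Prefix of length n of the infinite word w = w<1> w<2> w<3> ...;
  the first n blocks already have total length n(n+1) >= n.\<close>
definition wpref :: "real \<Rightarrow> nat \<Rightarrow> nat list" where
  "wpref r n = take n (concat (map (wblock r) [1..<Suc n]))"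

text \<open>P(u), with 1-based letters u_i = u ! (i - 1).\<close>
definition Pset :: "nat list \<Rightarrow> nat set" where
  "Pset u = {i. 2 \<le> i \<and>
     ((i \<le> length u \<and> u ! (i - 2) = 0 \<and> u ! (i - 1) = 0)
    \<or> (i + 2 \<le> length u \<and> u ! (i - 2) = 0 \<and> u ! (i - 1) = 1 \<and> u ! i = 0 \<and> u ! (i + 1) = 0)
    \<or> (i + 3 \<le> length u \<and> u ! (i - 2) = 0 \<and> u ! (i - 1) = 1 \<and> u ! i = 0
        \<and> u ! (i + 1) = 1 \<and> u ! (i + 2) = 0))}"

end

theory Submission imports Defs "HOL-Real_Asymp.Real_Asymp" begin

text \<open>Each index of \<open>P(u)\<close> is preceded by a zero of \<open>u\<close>, and each zero that is followed by
  another zero yields an index of type (i) in \<open>P(u)\<close>; every other zero is the last letter or sits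
  at a change of letter. In \<open>w\<close> letters change only between blocks, and the first \<open>n\<close> letters
  meet only \<open>O(\<surd>n)\<close> blocks, so \<open>|P(w\<^sup>(\<^sup>n\<^sup>))|\<close> is the number of zeros among them up to \<open>O(\<surd>n)\<close>.
  The rule for \<open>\<delta>\<^sub>k\<close> appends a block of zeros exactly when the density of zeros in the first
  \<open>k(k+1)\<close> letters stays at most \<open>r\<close>; as a block has length \<open>2k\<close>, this keeps the number of
  zeros within \<open>2k\<close> of \<open>r k(k+1)\<close>, hence within \<open>O(\<surd>n)\<close> of \<open>r n\<close>.\<close>

declare delta.simps [simp del]

lemma delta_le_1: "delta r k \<le> 1"
  by (subst delta.simps) auto

lemma count_list_replicate: "count_list (replicate n a) x = (if a = x then n else 0)"
  by (induction n) auto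

lemma count_list_take_mono: "i \<le> j \<Longrightarrow> count_list (take i xs) x \<le> count_list (take j xs) x"
  by (metis count_list_append le_add1 le_add_diff_inverse take_add)

lemma count_list_conv_card: "count_list xs x = card {i. i < length xs \<and> xs ! i = x}"
  by (simp add: count_list_eq_length_filter length_filter_conv_card eq_commute[of x])

definition wblocks :: "real \<Rightarrow> nat \<Rightarrow> nat list" where
  "wblocks r m = concat (map (wblock r) [1..<Suc m])"

lemma wblocks_0 [simp]: "wblocks r 0 = []"
  by (simp add: wblocks_def)

lemma wblocks_Suc: "wblocks r (Suc m) = wblocks r m @ wblock r (Suc m)"
  by (simp add: wblocks_def)

lemma length_wblocks [simp]: "length (wblocks r m) = m * (m + 1)"
  by (induction m) (auto simp: wblocks_Suc wblock_def)

lemma take_wblocks: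
  assumes "n \<le> a * (a + 1)" and "a \<le> b"
  shows "take n (wblocks r b) = take n (wblocks r a)"
proof -
  have "[1..<Suc b] = [1..<Suc a] @ [Suc a..<Suc b]"
    using upt_add_eq_append[of 1 "Suc a" "b - a"] assms(2) by simp
  then have "wblocks r b = wblocks r a @ concat (map (wblock r) [Suc a..<Suc b])"
    by (simp add: wblocks_def)
  then show ?thesis
    using assms(1) by simp
qed

lemma wpref_eq_take_wblocks:
  assumes "n \<le> m * (m + 1)"
  shows "wpref r n = take n (wblocks r m)"
proof -
  have "wpref r n = take n (wblocks r n)"
    by (simp add: wpref_def wblocks_def)
  also have "\<dots> = take n (wblocks r m)"
    using assms take_wblocks[of n n m] take_wblocks[of n m n] by (cases "n \<le> m") auto
  finally show ?thesis .
qed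

lemma count_zeros_wblock: "count_list (wblock r k) 0 = 2 * k * delta r k"
  using delta_le_1[of r k] by (auto simp: wblock_def count_list_replicate le_Suc_eq)

lemma count_zeros_wblocks: "count_list (wblocks r m) 0 = (\<Sum>i\<in>{1..<Suc m}. 2 * i * delta r i)"
  by (induction m) (simp_all add: wblocks_Suc count_zeros_wblock)

lemma delta_Suc_greedy:
  "delta r (Suc m) =
    (if (real (count_list (wblocks r m) 0) + 2 * real (Suc m)) / (real (Suc m) * real (Suc m + 1)) \<le> r
     then 1 else 0)"
  by (subst delta.simps) (simp add: count_zeros_wblocks)

lemma count_zeros_wblocks_le:
  assumes "0 \<le> r"
  shows "real (count_list (wblocks r m) 0) \<le> r * m * (m + 1)"
proof (induction m)
  case (Suc m)
  let ?z = "real (count_list (wblocks r m) 0)"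
  show ?case
  proof (cases "(?z + 2 * real (Suc m)) / (real (Suc m) * real (Suc m + 1)) \<le> r")
    case True
    then have "?z + 2 * real (Suc m) \<le> r * (real (Suc m) * real (Suc m + 1))"
      by (simp add: divide_le_eq)
    then show ?thesis
      using True by (simp add: wblocks_Suc count_zeros_wblock delta_Suc_greedy algebra_simps)
  next
    case False
    have "r * m * (m + 1) \<le> r * Suc m * (Suc m + 1)"
      using assms by (intro mult_mono) auto
    then show ?thesis
      using False Suc by (simp add: wblocks_Suc count_zeros_wblock delta_Suc_greedy)
  qed
qed simp

lemma count_zeros_wblocks_ge:
  assumes "r \<le> 1"
  shows "r * m * (m + 1) - 2 * (m + 1) \<le> real (count_list (wblocks r m) 0)"
proof (induction m)
  case (Suc m)
  let ?z = "real (count_list (wblocks r m) 0)"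
  show ?case
  proof (cases "(?z + 2 * real (Suc m)) / (real (Suc m) * real (Suc m + 1)) \<le> r")
    case True
    have "r * real (m + 1) \<le> real (m + 1)"
      using mult_right_mono[OF assms, of "real (m + 1)"] by simp
    then show ?thesis
      using True Suc by (simp add: wblocks_Suc count_zeros_wblock delta_Suc_greedy algebra_simps)
  next
    case False
    then have "r * (real (Suc m) * real (Suc m + 1)) < ?z + 2 * real (Suc m)"
      by (simp add: divide_le_eq)
    then show ?thesis
      using False by (simp add: wblocks_Suc count_zeros_wblock delta_Suc_greedy algebra_simps)
  qed
qed simp

definition letter_changes :: "'a list \<Rightarrow> nat set" where
  "letter_changes u = {j. Suc j < length u \<and> u ! j \<noteq> u ! Suc j}"

lemma letter_changes_take_subset: "letter_changes (take n u) \<subseteq> letter_changes u"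
  by (auto simp: letter_changes_def)

lemma letter_changes_wblocks: "letter_changes (wblocks r m) \<subseteq> (\<lambda>k. k * (k + 1) - 1) ` {1..<m}"
proof (induction m)
  case (Suc m)
  have last_block: "wblocks r (Suc m) ! i = 1 - delta r (Suc m)"
    if "m * (m + 1) \<le> i" "i < Suc m * (Suc m + 1)" for i
  proof -
    have "\<not> i < m * (m + 1)" "i - m * (m + 1) < 2 * Suc m"
      using that by (auto simp: algebra_simps)
    then show ?thesis
      by (simp only: wblocks_Suc nth_append length_wblocks wblock_def if_False nth_replicate)
  qed
  show ?case
  proof
    fix j
    assume j: "j \<in> letter_changes (wblocks r (Suc m))"
    consider "Suc j < m * (m + 1)" | "Suc j = m * (m + 1)" | "m * (m + 1) < Suc j"
      by linarith
    then show "j \<in> (\<lambda>k. k * (k + 1) - 1) ` {1..<Suc m}"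
    proof cases
      case 1
      with j have "j \<in> letter_changes (wblocks r m)"
        by (auto simp: letter_changes_def wblocks_Suc nth_append)
      with Suc.IH show ?thesis
        by auto
    next
      case 2
      then have "m \<noteq> 0"
        by (cases m) auto
      with 2 show ?thesis
        by (intro image_eqI[of _ _ m]) auto
    next
      case 3
      with j show ?thesis
        by (auto simp: letter_changes_def last_block less_Suc_eq_le)
    qed
  qed
qed (simp add: letter_changes_def)

lemma card_Pset_le_count_zeros: "card (Pset u) \<le> count_list u 0"
proof -
  have "Pset u \<subseteq> (\<lambda>j. j + 2) ` {j. j < length u \<and> u ! j = 0}"
  proof
    fix i
    assume "i \<in> Pset u"
    then have "2 \<le> i" "i \<le> length u" "u ! (i - 2) = 0"
      unfolding Pset_def by auto
    then show "i \<in> (\<lambda>j. j + 2) ` {j. j < length u \<and> u ! j = 0}"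
      by (intro image_eqI[of _ _ "i - 2"]) auto
  qed
  then have "card (Pset u) \<le> card ((\<lambda>j. j + 2) ` {j. j < length u \<and> u ! j = 0})"
    by (intro card_mono) auto
  also have "\<dots> \<le> card {j. j < length u \<and> u ! j = 0}"
    by (rule card_image_le) auto
  finally show ?thesis
    by (simp add: count_list_conv_card)
qed

lemma count_zeros_le_card_Pset_letter_changes:
  "count_list u 0 \<le> card (Pset u) + card (letter_changes u) + 1"
proof -
  define D where "D = {j. Suc j < length u \<and> u ! j = 0 \<and> u ! Suc j = 0}"
  define C where "C = letter_changes u"
  have "(\<lambda>j. j + 2) ` D \<subseteq> Pset u"
    by (auto simp: D_def Pset_def)
  moreover have "finite (Pset u)"
    by (rule finite_subset[of _ "{..length u}"]) (auto simp: Pset_def)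
  ultimately have "card ((\<lambda>j. j + 2) ` D) \<le> card (Pset u)"
    by (rule card_mono[rotated])
  then have card_D: "card D \<le> card (Pset u)"
    by (simp add: card_image inj_on_def)
  have "{j. j < length u \<and> u ! j = 0} \<subseteq> D \<union> C \<union> {length u - 1}"
    by (auto simp: D_def C_def letter_changes_def)
  then have "card {j. j < length u \<and> u ! j = 0} \<le> card (D \<union> C \<union> {length u - 1})"
    by (rule card_mono[rotated])
      (auto intro: finite_subset[of _ "{..<length u}"] simp: D_def C_def letter_changes_def)
  also have "\<dots> \<le> card D + card C + 1"
    using card_Un_le[of "D \<union> C" "{length u - 1}"] card_Un_le[of D C] by simp
  finally show ?thesis
    using card_D by (simp add: count_list_conv_card C_def)
qed

lemma triangular_bracket: "\<exists>m. m * (m + 1) \<le> (n::nat) \<and> n < (m + 1) * (m + 2)"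
proof (induction n)
  case 0
  show ?case
    by (intro exI[of _ 0]) simp
next
  case (Suc n)
  then obtain m where m: "m * (m + 1) \<le> n" "n < (m + 1) * (m + 2)"
    by blast
  show ?case
  proof (cases "Suc n < (m + 1) * (m + 2)")
    case True
    with m(1) show ?thesis
      by (intro exI[of _ m]) simp
  next
    case False
    with m(2) have "Suc n = (m + 1) * (m + 2)"
      by simp
    then show ?thesis
      by (intro exI[of _ "Suc m"]) (simp add: algebra_simps)
  qed
qed

lemma card_letter_changes_wpref:
  assumes "n \<le> (m + 1) * (m + 2)"
  shows "card (letter_changes (wpref r n)) \<le> m"
proof -
  have "wpref r n = take n (wblocks r (Suc m))"
    using assms by (simp add: wpref_eq_take_wblocks algebra_simps)
  then have "letter_changes (wpref r n) \<subseteq> (\<lambda>k. k * (k + 1) - 1) ` {1..<Suc m}"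
    using letter_changes_take_subset letter_changes_wblocks by (metis subset_trans)
  then have "card (letter_changes (wpref r n)) \<le> card ((\<lambda>k. k * (k + 1) - 1) ` {1..<Suc m})"
    by (rule card_mono[rotated]) auto
  also have "\<dots> \<le> m"
    using card_image_le[of "{1..<Suc m}" "\<lambda>k. k * (k + 1) - 1"] by simp
  finally show ?thesis .
qed

lemma count_zeros_wpref_bounds:
  assumes "m * (m + 1) \<le> n" and "n \<le> (m + 1) * (m + 2)"
  shows "count_list (wblocks r m) 0 \<le> count_list (wpref r n) 0"
    and "count_list (wpref r n) 0 \<le> count_list (wblocks r (Suc m)) 0"
proof -
  have wpref: "wpref r n = take n (wblocks r (Suc m))"
    using assms(2) by (simp add: wpref_eq_take_wblocks algebra_simps)
  have "wblocks r m = take (m * (m + 1)) (wblocks r (Suc m))"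
    by (simp add: wblocks_Suc)
  then show "count_list (wblocks r m) 0 \<le> count_list (wpref r n) 0"
    using count_list_take_mono[OF assms(1)] wpref by metis
  show "count_list (wpref r n) 0 \<le> count_list (wblocks r (Suc m)) 0"
    using count_list_take_mono[of n "length (wblocks r (Suc m))" "wblocks r (Suc m)" 0] assms(2)
    by (simp add: wpref algebra_simps)
qed

lemma card_Pset_wpref_approx:
  assumes "0 \<le> r" and "r \<le> 1"
  shows "\<bar>real (card (Pset (wpref r n))) - r * n\<bar> \<le> 5 * (sqrt n + 1)"
proof -
  obtain m where m_lower: "m * (m + 1) \<le> n" and m_upper: "n < (m + 1) * (m + 2)"
    using triangular_bracket by blast
  define c where "c = real (card (Pset (wpref r n)))"
  define z where "z = real (count_list (wpref r n) 0)"
  define M where "M = real m"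
  define lower where "lower = r * (M * (M + 1))"
  define upper where "upper = r * ((M + 1) * (M + 2))"
  have c_le_z: "c \<le> z"
    unfolding c_def z_def using card_Pset_le_count_zeros by simp
  have z_le_c: "z \<le> c + (M + 1)"
    using count_zeros_le_card_Pset_letter_changes[of "wpref r n"]
      card_letter_changes_wpref[OF less_imp_le[OF m_upper], of r]
    unfolding c_def z_def M_def by simp
  have z_le_upper: "z \<le> upper"
    using count_zeros_wpref_bounds(2)[OF m_lower less_imp_le[OF m_upper], of r]
      count_zeros_wblocks_le[OF assms(1), of "Suc m"]
    unfolding z_def upper_def M_def by (simp add: algebra_simps)
  have lower_le_z: "lower - 2 * (M + 1) \<le> z"
    using count_zeros_wpref_bounds(1)[OF m_lower less_imp_le[OF m_upper], of r]
      count_zeros_wblocks_ge[OF assms(2), of m]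
    unfolding z_def lower_def M_def by (simp add: algebra_simps)
  have "real (m * (m + 1)) \<le> n" and "n \<le> real ((m + 1) * (m + 2))"
    using m_lower m_upper by (simp_all only: of_nat_le_iff less_imp_le)
  then have "M * (M + 1) \<le> n" and "n \<le> (M + 1) * (M + 2)"
    unfolding M_def by (simp_all add: algebra_simps)
  then have lower_le: "lower \<le> r * n" and le_upper: "r * n \<le> upper"
    unfolding lower_def upper_def using assms(1) by (simp_all add: mult_left_mono)
  have gap: "upper - lower \<le> 2 * (M + 1)"
    using mult_right_mono[OF assms(2), of "M + 1"]
    unfolding upper_def lower_def M_def by (simp add: algebra_simps)
  have "c - r * n \<le> 5 * (M + 1)"
    using c_le_z z_le_upper lower_le gap by (simp add: M_def)
  moreover have "r * n - c \<le> 5 * (M + 1)"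
    using z_le_c lower_le_z le_upper gap by simp
  ultimately have "\<bar>c - r * n\<bar> \<le> 5 * (M + 1)"
    by (simp add: abs_le_iff)
  also have "\<dots> \<le> 5 * (sqrt n + 1)"
  proof -
    have "M \<le> sqrt n"
      using m_lower unfolding M_def
      by (intro real_le_rsqrt) (simp add: power2_eq_square flip: of_nat_mult)
    then show ?thesis
      by simp
  qed
  finally show ?thesis
    unfolding c_def .
qed

theorem lemma4p17:
  fixes r :: real
  assumes "0 \<le> r" and "r < 1"
  shows "(\<lambda>n. real (card (Pset (wpref r n))) / real n) \<longlonglongrightarrow> r"
proof (rule LIM_zero_cancel, rule tendsto_0_le)
  show "(\<lambda>n. (sqrt (real n) + 1) / real n) \<longlonglongrightarrow> 0"
    by real_asymp
  show "\<forall>\<^sub>F n in sequentially. norm (real (card (Pset (wpref r n))) / real n - r)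
      \<le> norm ((sqrt (real n) + 1) / real n) * 5"
  proof (rule eventually_sequentiallyI[of 1])
    fix n :: nat
    assume "1 \<le> n"
    then have "real (card (Pset (wpref r n))) / real n - r
        = (real (card (Pset (wpref r n))) - r * n) / real n"
      by (simp add: field_simps)
    then show "norm (real (card (Pset (wpref r n))) / real n - r)
        \<le> norm ((sqrt (real n) + 1) / real n) * 5"
      using card_Pset_wpref_approx[of r n] assms
      by (simp add: abs_divide divide_right_mono)
  qed
qed

end
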